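(* For stochastic CA $\mathcal{A}_1,\mathcal{A}_2$: if $\mathcal{A}_1\sqsubseteq^S_i\mathcal{A}_2$ then $\mathcal{A}_1\sqsubseteq^N_i\mathcal{A}_2$; if $\mathcal{A}_1\sqsubseteq^S_\pi\mathcal{A}_2$ then $\mathcal{A}_1\sqsubseteq^N_\pi\mathcal{A}_2$; and if $\mathcal{A}_1\sqsubseteq^S_m\mathcal{A}_2$ then $\mathcal{A}_1\sqsubseteq^N_m\mathcal{A}_2$.
   Context: A stochastic CA is $(Q,R,V,V',f)$ with $Q$ finite states, $R$ finite random symbols, $V=\{v_1,\dots,v_r\}$, $V'=\{v'_1,\dots,v'_{r'}\}$ finite subsets of $\mathbb{Z}$, $f:Q^r\times R^{r'}\to Q$; explicit global function $F(c,s)_z=f((c_{z+v_1},\dots,c_{z+v_r}),(s_{z+v'_1},\dots,s_{z+v'_{r'}}))$. Non-deterministic global function $N_F(c)=\{F(c,s):s\in R^{\mathbb{Z}}\}$; stochastic global function $S_F(c)$ = law of $F(c,s)$ for $s$ distributed by the uniform Bernoulli measure on $R^{\mathbb{Z}}$. Iterates: $F^0(c)=c$, $F^{t+1}(c,s^1,\dots,s^{t+1})=F(F^t(c,s^1,\dots,s^t),s^{t+1})$. Restriction: for injective $i:Q'\to Q$ with $Y=i(Q')^{\mathbb{Z}}$ satisfying $F(Y,R^{\mathbb{Z}})\subseteq Y$, the $i$-restriction has states $Q'$, random symbols $R$, explicit global function $I^{-1}(F(I(c),s))$ ($I$ the cellwise extension of $i$). Projection: for surjective $\pi:Q\to Q'$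 with cellwise extension $\Pi$ such that $\Pi(F(c,s))=\Pi(F(c',s))$ whenever $\Pi(c)=\Pi(c')$, the $\pi$-projection has states $Q'$, random symbols $R$, explicit global function $(c',s)\mapsto\Pi(F(c,s))$ for any $c\in\Pi^{-1}(c')$. Rescaling with $m,t\ge1,k\in\mathbb{Z}$: $\mathcal{A}^{\langle m,t,k\rangle}$ has states $Q^m$, random symbols $(R^m)^t$, explicit global function $b_m\circ\sigma_k\circ F^t(b_m^{-1}(c),b_m^{-1}(s^1),\dots,b_m^{-1}(s^t))$ where $s^i_j=(s_j)_i$, $\sigma_k(c)_z=c_{z+k}$, $b_m(c)_z=(c_{mz},\dots,c_{mz+m-1})$. For $X\in\{S,N\}$: $\mathcal{A}_1\sqsubseteq^X_i\mathcal{A}_2$ (resp. $\sqsubseteq^X_\pi$, $\sqsubseteq^X_m$) iff there are $m_1,m_2,t_1,t_2,k_1,k_2$ such that $\mathcal{A}_1^{\langle m_1,t_1,k_1\rangle}$ has the same stochastic (for $X=S$) or non-deterministic (for $X=N$) global function as some $i$-restriction (resp. some $\pi$-projection, resp. some $\pi$-projection of some $i$-restriction) of $\mathcal{A}_2^{\langle m_2,t_2,k_2\rangle}$. *)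

theory Defs
  imports "HOL-Probability.Probability"
begin

text \<open>A stochastic CA (Q,R,V,V',f). The neighbourhoods V = {v_1..v_r}, V' = {v'_1..v'_r'}
  are given as lists (fixing the enumeration used by the local rule f).\<close>
record ('q, 'r) sca =
  states :: "'q set"
  rands :: "'r set"
  nbh :: "int list"
  rnbh :: "int list"
  rule :: "'q list \<Rightarrow> 'r list \<Rightarrow> 'q"

definition is_sca :: "('q, 'r) sca \<Rightarrow> bool" where
  "is_sca A \<longleftrightarrow> finite (states A) \<and> finite (rands A) \<and> rands A \<noteq> {} \<and>
     (\<forall>qs rs. length qs = length (nbh A) \<and> set qs \<subseteq> states A \<and>
              length rs = length (rnbh A) \<and> set rs \<subseteq> rands A \<longrightarrow> rule A qs rs \<in> states A)"

definition conf :: "'a set \<Rightarrow> (int \<Rightarrow> 'a) set" where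
  "conf Q = {c. \<forall>z. c z \<in> Q}"

definition GF :: "('q, 'r) sca \<Rightarrow> (int \<Rightarrow> 'q) \<Rightarrow> (int \<Rightarrow> 'r) \<Rightarrow> (int \<Rightarrow> 'q)" where
  "GF A c s = (\<lambda>z. rule A (map (\<lambda>v. c (z + v)) (nbh A)) (map (\<lambda>v. s (z + v)) (rnbh A)))"

text \<open>Iterates: giter F t c ss uses random fields ss 0, ..., ss (t-1) (= s^1,...,s^t).\<close>
primrec giter :: "((int \<Rightarrow> 'q) \<Rightarrow> (int \<Rightarrow> 'r) \<Rightarrow> (int \<Rightarrow> 'q)) \<Rightarrow> nat \<Rightarrow> (int \<Rightarrow> 'q)
    \<Rightarrow> (nat \<Rightarrow> int \<Rightarrow> 'r) \<Rightarrow> (int \<Rightarrow> 'q)" where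
  "giter F 0 c ss = c"
| "giter F (Suc n) c ss = F (giter F n c ss) (ss n)"

definition blk :: "nat \<Rightarrow> (int \<Rightarrow> 'a) \<Rightarrow> (int \<Rightarrow> 'a list)" where
  "blk m c = (\<lambda>z. map (\<lambda>j. c (int m * z + int j)) [0..<m])"

definition unblk :: "nat \<Rightarrow> (int \<Rightarrow> 'a list) \<Rightarrow> (int \<Rightarrow> 'a)" where
  "unblk m c = (\<lambda>z. c (z div int m) ! nat (z mod int m))"

definition shift :: "int \<Rightarrow> (int \<Rightarrow> 'a) \<Rightarrow> (int \<Rightarrow> 'a)" where
  "shift k c = (\<lambda>z. c (z + k))"

text \<open>Q^m and (R^m)^t as sets of lists.\<close>
definition states_pow :: "'a set \<Rightarrow> nat \<Rightarrow> 'a list set" where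
  "states_pow Q m = {xs. length xs = m \<and> set xs \<subseteq> Q}"

definition rand_pow :: "'a set \<Rightarrow> nat \<Rightarrow> nat \<Rightarrow> 'a list list set" where
  "rand_pow R m t = {ys. length ys = t \<and> (\<forall>y\<in>set ys. y \<in> states_pow R m)}"

definition rescale :: "('q, 'r) sca \<Rightarrow> nat \<Rightarrow> nat \<Rightarrow> int
    \<Rightarrow> (int \<Rightarrow> 'q list) \<Rightarrow> (int \<Rightarrow> 'r list list) \<Rightarrow> (int \<Rightarrow> 'q list)" where
  "rescale A m t k c s =
     blk m (shift k (giter (GF A) t (unblk m c) (\<lambda>i. unblk m (\<lambda>j. s j ! i))))"

definition SF :: "'q set \<Rightarrow> 'r set \<Rightarrow> ((int \<Rightarrow> 'q) \<Rightarrow> (int \<Rightarrow> 'r) \<Rightarrow> (int \<Rightarrow> 'q))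
    \<Rightarrow> (int \<Rightarrow> 'q) \<Rightarrow> (int \<Rightarrow> 'q) measure" where
  "SF Q R F c = distr (PiM (UNIV :: int set) (\<lambda>_. uniform_count_measure R))
                      (PiM (UNIV :: int set) (\<lambda>_. count_space Q)) (F c)"

definition NF :: "'r set \<Rightarrow> ((int \<Rightarrow> 'q) \<Rightarrow> (int \<Rightarrow> 'r) \<Rightarrow> (int \<Rightarrow> 'q))
    \<Rightarrow> (int \<Rightarrow> 'q) \<Rightarrow> (int \<Rightarrow> 'q) set" where
  "NF R F c = F c ` conf R"

datatype xmode = XS | XN

definition same :: "xmode \<Rightarrow> 'q set \<Rightarrow> 'r1 set \<Rightarrow> ((int \<Rightarrow> 'q) \<Rightarrow> (int \<Rightarrow> 'r1) \<Rightarrow> (int \<Rightarrow> 'q))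
    \<Rightarrow> 'r2 set \<Rightarrow> ((int \<Rightarrow> 'q) \<Rightarrow> (int \<Rightarrow> 'r2) \<Rightarrow> (int \<Rightarrow> 'q)) \<Rightarrow> bool" where
  "same X Q Ra Fa Rb Fb = (case X of
      XS \<Rightarrow> (\<forall>c\<in>conf Q. SF Q Ra Fa c = SF Q Rb Fb c)
    | XN \<Rightarrow> (\<forall>c\<in>conf Q. NF Ra Fa c = NF Rb Fb c))"

definition restr_ok :: "'a set \<Rightarrow> ('a \<Rightarrow> 'q) \<Rightarrow> 'q set \<Rightarrow> 'r set
    \<Rightarrow> ((int \<Rightarrow> 'q) \<Rightarrow> (int \<Rightarrow> 'r) \<Rightarrow> (int \<Rightarrow> 'q)) \<Rightarrow> bool" where
  "restr_ok Q' i Q R F \<longleftrightarrow> inj_on i Q' \<and> i ` Q' \<subseteq> Q \<and>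
     (\<forall>c\<in>conf (i ` Q'). \<forall>s\<in>conf R. F c s \<in> conf (i ` Q'))"

definition restr :: "'a set \<Rightarrow> ('a \<Rightarrow> 'q) \<Rightarrow> ((int \<Rightarrow> 'q) \<Rightarrow> (int \<Rightarrow> 'r) \<Rightarrow> (int \<Rightarrow> 'q))
    \<Rightarrow> (int \<Rightarrow> 'a) \<Rightarrow> (int \<Rightarrow> 'r) \<Rightarrow> (int \<Rightarrow> 'a)" where
  "restr Q' i F c s = (\<lambda>z. the_inv_into Q' i (F (i \<circ> c) s z))"

definition proj_ok :: "('q \<Rightarrow> 'a) \<Rightarrow> 'q set \<Rightarrow> 'a set \<Rightarrow> 'r set
    \<Rightarrow> ((int \<Rightarrow> 'q) \<Rightarrow> (int \<Rightarrow> 'r) \<Rightarrow> (int \<Rightarrow> 'q)) \<Rightarrow> bool" where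
  "proj_ok p Q Q' R F \<longleftrightarrow> p ` Q = Q' \<and>
     (\<forall>c\<in>conf Q. \<forall>c'\<in>conf Q. \<forall>s\<in>conf R. p \<circ> c = p \<circ> c' \<longrightarrow> p \<circ> F c s = p \<circ> F c' s)"

definition proj :: "('q \<Rightarrow> 'a) \<Rightarrow> 'q set \<Rightarrow> ((int \<Rightarrow> 'q) \<Rightarrow> (int \<Rightarrow> 'r) \<Rightarrow> (int \<Rightarrow> 'q))
    \<Rightarrow> (int \<Rightarrow> 'a) \<Rightarrow> (int \<Rightarrow> 'r) \<Rightarrow> (int \<Rightarrow> 'a)" where
  "proj p Q F c' s = p \<circ> F (SOME c. c \<in> conf Q \<and> p \<circ> c = c') s"

definition sim_i :: "xmode \<Rightarrow> ('q1, 'r1) sca \<Rightarrow> ('q2, 'r2) sca \<Rightarrow> bool" where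
  "sim_i X A1 A2 \<longleftrightarrow> (\<exists>m1 m2 t1 t2 k1 k2 (i :: 'q1 list \<Rightarrow> 'q2 list).
     m1 \<ge> 1 \<and> m2 \<ge> 1 \<and> t1 \<ge> 1 \<and> t2 \<ge> 1 \<and>
     restr_ok (states_pow (states A1) m1) i (states_pow (states A2) m2)
              (rand_pow (rands A2) m2 t2) (rescale A2 m2 t2 k2) \<and>
     same X (states_pow (states A1) m1) (rand_pow (rands A1) m1 t1) (rescale A1 m1 t1 k1)
            (rand_pow (rands A2) m2 t2)
            (restr (states_pow (states A1) m1) i (rescale A2 m2 t2 k2)))"

definition sim_pi :: "xmode \<Rightarrow> ('q1, 'r1) sca \<Rightarrow> ('q2, 'r2) sca \<Rightarrow> bool" where
  "sim_pi X A1 A2 \<longleftrightarrow> (\<exists>m1 m2 t1 t2 k1 k2 (p :: 'q2 list \<Rightarrow> 'q1 list).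
     m1 \<ge> 1 \<and> m2 \<ge> 1 \<and> t1 \<ge> 1 \<and> t2 \<ge> 1 \<and>
     proj_ok p (states_pow (states A2) m2) (states_pow (states A1) m1)
             (rand_pow (rands A2) m2 t2) (rescale A2 m2 t2 k2) \<and>
     same X (states_pow (states A1) m1) (rand_pow (rands A1) m1 t1) (rescale A1 m1 t1 k1)
            (rand_pow (rands A2) m2 t2)
            (proj p (states_pow (states A2) m2) (rescale A2 m2 t2 k2)))"

text \<open>Intermediate state set Q' of the restriction is taken inside the type of Q2^m2 lists
  (w.l.o.g., since it injects into Q2^m2).\<close>
definition sim_m :: "xmode \<Rightarrow> ('q1, 'r1) sca \<Rightarrow> ('q2, 'r2) sca \<Rightarrow> bool" where
  "sim_m X A1 A2 \<longleftrightarrow> (\<exists>m1 m2 t1 t2 k1 k2 (Q' :: 'q2 list set) (i :: 'q2 list \<Rightarrow> 'q2 list)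
                          (p :: 'q2 list \<Rightarrow> 'q1 list).
     m1 \<ge> 1 \<and> m2 \<ge> 1 \<and> t1 \<ge> 1 \<and> t2 \<ge> 1 \<and>
     restr_ok Q' i (states_pow (states A2) m2) (rand_pow (rands A2) m2 t2) (rescale A2 m2 t2 k2) \<and>
     proj_ok p Q' (states_pow (states A1) m1) (rand_pow (rands A2) m2 t2)
             (restr Q' i (rescale A2 m2 t2 k2)) \<and>
     same X (states_pow (states A1) m1) (rand_pow (rands A1) m1 t1) (rescale A1 m1 t1 k1)
            (rand_pow (rands A2) m2 t2)
            (proj p Q' (restr Q' i (rescale A2 m2 t2 k2))))"

end

theory Submission
  imports Defs
begin

text \<open>Every global function occurring in the simulations is local in its random argument: each cell
  of the output depends on finitely many cells of the random field. Such a map is measurable for the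
  Bernoulli measure and continuous for the product of discrete topologies, and its image over the
  compact space of random fields is closed. Hence a configuration belongs to the image iff every
  cylinder around it has positive probability: the non-deterministic global function is the support
  of the stochastic one, so equal laws give equal images.\<close>

abbreviation uniform_fields :: "'r set \<Rightarrow> (int \<Rightarrow> 'r) measure" where
  "uniform_fields R \<equiv> PiM UNIV (\<lambda>_. uniform_count_measure R)"

abbreviation conf_space :: "'q set \<Rightarrow> (int \<Rightarrow> 'q) measure" where
  "conf_space Q \<equiv> PiM UNIV (\<lambda>_. count_space Q)"

abbreviation conf_topology :: "'q set \<Rightarrow> (int \<Rightarrow> 'q) topology" where
  "conf_topology Q \<equiv> product_topology (\<lambda>_. discrete_topology Q) UNIV"

definition locally_determined :: "(('i \<Rightarrow> 'a) \<Rightarrow> ('j \<Rightarrow> 'b)) \<Rightarrow> bool" where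
  "locally_determined G \<longleftrightarrow>
     (\<forall>z. \<exists>W. finite W \<and> (\<forall>s s'. (\<forall>w\<in>W. s w = s' w) \<longrightarrow> G s z = G s' z))"

definition cylinder :: "int set \<Rightarrow> (int \<Rightarrow> 'a) \<Rightarrow> 'a set \<Rightarrow> (int \<Rightarrow> 'a) set" where
  "cylinder W x Q = {y \<in> conf Q. \<forall>w\<in>W. y w = x w}"

lemma locally_determinedI:
  assumes "\<And>z. finite (W z)" "\<And>z s s'. (\<forall>w\<in>W z. s w = s' w) \<Longrightarrow> G s z = G s' z"
  shows "locally_determined G"
  using assms unfolding locally_determined_def by blast

section \<open>Locality of the global functions\<close>

lemma locally_determined_giter_unblk:
  fixes A :: "('q, 'r) sca"
  shows "locally_determined (\<lambda>S. giter (GF A) n c (\<lambda>i. unblk m (\<lambda>j. S j ! i)))"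
proof (induction n)
  case 0
  show ?case by (rule locally_determinedI[of "\<lambda>_. {}"]) simp_all
next
  case (Suc n)
  let ?G = "\<lambda>n S. giter (GF A) n c (\<lambda>i. unblk m (\<lambda>j. S j ! i))"
  obtain W where W: "\<And>z. finite (W z)" "\<And>z S S'. (\<forall>w\<in>W z. S w = S' w) \<Longrightarrow> ?G n S z = ?G n S' z"
    using Suc.IH unfolding locally_determined_def by metis
  show ?case
  proof (rule locally_determinedI[of
        "\<lambda>z. (\<Union>v\<in>set (nbh A). W (z + v)) \<union> (\<lambda>v. (z + v) div int m) ` set (rnbh A)"])
    fix z and S S' :: "int \<Rightarrow> 'r list list"
    assume agree: "\<forall>w \<in> (\<Union>v\<in>set (nbh A). W (z + v)) \<union> (\<lambda>v. (z + v) div int m) ` set (rnbh A).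
                     S w = S' w"
    have "map (\<lambda>v. ?G n S (z + v)) (nbh A) = map (\<lambda>v. ?G n S' (z + v)) (nbh A)"
      using agree by (intro map_cong refl W(2)) auto
    moreover have "map (\<lambda>v. unblk m (\<lambda>j. S j ! n) (z + v)) (rnbh A)
                 = map (\<lambda>v. unblk m (\<lambda>j. S' j ! n) (z + v)) (rnbh A)"
      using agree by (auto simp: unblk_def intro!: map_cong)
    ultimately show "?G (Suc n) S z = ?G (Suc n) S' z"
      by (simp only: giter.simps GF_def)
  qed (use W(1) in auto)
qed

lemma locally_determined_rescale:
  fixes A :: "('q, 'r) sca"
  shows "locally_determined (rescale A m t k c)"
proof -
  let ?G = "\<lambda>S. giter (GF A) t (unblk m c) (\<lambda>i. unblk m (\<lambda>j. S j ! i))"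
  obtain W where W: "\<And>z. finite (W z)" "\<And>z S S'. (\<forall>w\<in>W z. S w = S' w) \<Longrightarrow> ?G S z = ?G S' z"
    using locally_determined_giter_unblk[of A t "unblk m c" m]
    unfolding locally_determined_def by metis
  show ?thesis
  proof (rule locally_determinedI[of "\<lambda>z. \<Union>j\<in>{0..<m}. W (int m * z + int j + k)"])
    fix z and s s' :: "int \<Rightarrow> 'r list list"
    assume "\<forall>w\<in>\<Union>j\<in>{0..<m}. W (int m * z + int j + k). s w = s' w"
    then have "map (\<lambda>j. ?G s (int m * z + int j + k)) [0..<m]
             = map (\<lambda>j. ?G s' (int m * z + int j + k)) [0..<m]"
      by (intro map_cong refl W(2)) auto
    then show "rescale A m t k c s z = rescale A m t k c s' z"
      by (simp add: rescale_def blk_def shift_def)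
  qed (use W(1) in auto)
qed

lemma locally_determined_comp:
  assumes "locally_determined G"
  shows "locally_determined (\<lambda>s. h \<circ> G s)"
  unfolding locally_determined_def
proof
  fix z
  obtain W where "finite W" and "\<And>s s'. \<forall>w\<in>W. s w = s' w \<Longrightarrow> G s z = G s' z"
    using assms unfolding locally_determined_def by blast
  then show "\<exists>W. finite W \<and> (\<forall>s s'. (\<forall>w\<in>W. s w = s' w) \<longrightarrow> (h \<circ> G s) z = (h \<circ> G s') z)"
    by (intro exI[of _ W]) (metis comp_apply)
qed

lemma locally_determined_restr:
  assumes "locally_determined (F (i \<circ> c))"
  shows "locally_determined (restr Q' i F c)"
proof -
  have "restr Q' i F c = (\<lambda>s. the_inv_into Q' i \<circ> F (i \<circ> c) s)"
    by (simp add: restr_def fun_eq_iff)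
  then show ?thesis using locally_determined_comp[OF assms] by simp
qed

lemma locally_determined_proj:
  assumes "\<And>c. locally_determined (F c)"
  shows "locally_determined (proj p Q F c')"
  unfolding proj_def by (rule locally_determined_comp[OF assms])

section \<open>Cylinders, measurability and continuity\<close>

lemma PiE_UNIV_eq_conf [simp]: "PiE UNIV (\<lambda>_. R) = conf R"
  by (auto simp: conf_def PiE_def extensional_def)

lemma space_uniform_fields [simp]: "space (uniform_fields R) = conf R"
  by (simp add: space_PiM space_uniform_count_measure)

lemma space_conf_space [simp]: "space (conf_space Q) = conf Q"
  by (simp add: space_PiM)

lemma topspace_conf_topology [simp]: "topspace (conf_topology Q) = conf Q"
  by simp

lemma cylinder_eq_prod_emb:
  assumes "space M = Q"
  shows "cylinder W x Q = prod_emb UNIV (\<lambda>_. M) W (PiE W (\<lambda>w. {x w}))"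
  using assms by (auto simp: cylinder_def prod_emb_iff conf_def PiE_iff)

lemma cylinder_in_sets:
  assumes "space M = Q" "sets M = Pow Q" "finite W" "\<forall>w\<in>W. x w \<in> Q"
  shows "cylinder W x Q \<in> sets (PiM UNIV (\<lambda>_. M))"
  unfolding cylinder_eq_prod_emb[OF assms(1)] using assms by (intro sets_PiM_I) auto

lemma emeasure_uniform_fields_cylinder:
  assumes "finite R" "s \<in> conf R" "finite W"
  shows "emeasure (uniform_fields R) (cylinder W s R) = ennreal (1 / real (card R)) ^ card W"
proof -
  have "R \<noteq> {}" using assms(2) by (auto simp: conf_def)
  have "emeasure (uniform_fields R) (cylinder W s R) = (\<Prod>w\<in>W. emeasure (uniform_count_measure R) {s w})"
    unfolding cylinder_eq_prod_emb[OF space_uniform_count_measure]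
    using assms \<open>R \<noteq> {}\<close>
    by (intro emeasure_PiM_emb)
       (auto simp: prob_space_uniform_count_measure sets_uniform_count_measure conf_def)
  also have "\<dots> = (\<Prod>w\<in>W. ennreal (1 / real (card R)))"
    using assms(1,2) by (intro prod.cong refl) (simp add: emeasure_uniform_count_measure conf_def)
  finally show ?thesis by simp
qed

lemma locally_determined_measurable:
  fixes G :: "(int \<Rightarrow> 'r) \<Rightarrow> (int \<Rightarrow> 'q)"
  assumes G: "locally_determined G" and R: "finite R" and range: "\<forall>s\<in>conf R. G s \<in> conf Q"
  shows "G \<in> measurable (uniform_fields R) (conf_space Q)"
proof (rule measurable_PiM_single)
  show "G \<in> space (uniform_fields R) \<rightarrow> (\<Pi>\<^sub>E i\<in>UNIV. space (count_space Q))"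
    using range by simp
  fix B z
  obtain W where W: "finite W" "\<And>s s'. (\<forall>w\<in>W. s w = s' w) \<Longrightarrow> G s z = G s' z"
    using G unfolding locally_determined_def by blast
  define U where "U = {s\<in>conf R. G s z \<in> B}"
  have preimage: "{\<omega> \<in> space (uniform_fields R). G \<omega> z \<in> B}
      = (\<Union>v\<in>(\<lambda>s. restrict s W) ` U. cylinder W v R)"
  proof safe
    fix \<omega> assume "\<omega> \<in> space (uniform_fields R)" "G \<omega> z \<in> B"
    then show "\<omega> \<in> (\<Union>v\<in>(\<lambda>s. restrict s W) ` U. cylinder W v R)"
      by (auto simp: U_def cylinder_def)
  next
    fix \<omega> u assume "u \<in> U" "\<omega> \<in> cylinder W (restrict u W) R"
    moreover from this have "G \<omega> z = G u z" by (intro W(2)) (auto simp: cylinder_def)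
    ultimately show "G \<omega> z \<in> B" "\<omega> \<in> space (uniform_fields R)"
      by (auto simp: U_def cylinder_def)
  qed
  have "finite ((\<lambda>s. restrict s W) ` U)"
    by (rule finite_subset[OF _ finite_PiE[OF W(1), of "\<lambda>_. R"]])
       (use R in \<open>auto simp: U_def conf_def\<close>)
  then show "{\<omega> \<in> space (uniform_fields R). G \<omega> z \<in> B} \<in> sets (uniform_fields R)"
    unfolding preimage
    by (intro sets.finite_UN cylinder_in_sets)
       (auto simp: space_uniform_count_measure sets_uniform_count_measure U_def conf_def W(1))
qed

lemma cylinder_eq_PiE: "cylinder W x Q = PiE UNIV (\<lambda>i. if i \<in> W then {x i} \<inter> Q else Q)"
proof (rule set_eqI)
  fix y
  have "(\<forall>i. y i \<in> (if i \<in> W then {x i} \<inter> Q else Q)) \<longleftrightarrow> (\<forall>i. y i \<in> Q) \<and> (\<forall>w\<in>W. y w = x w)"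
    by (auto split: if_splits)
  then show "y \<in> cylinder W x Q \<longleftrightarrow> y \<in> PiE UNIV (\<lambda>i. if i \<in> W then {x i} \<inter> Q else Q)"
    unfolding cylinder_def conf_def PiE_UNIV_domain Pi_iff by simp
qed

lemma openin_cylinder:
  assumes "finite W"
  shows "openin (conf_topology Q) (cylinder W x Q)"
  unfolding cylinder_eq_PiE openin_PiE_gen
  by (rule disjI2, rule conjI, rule finite_subset[OF _ assms]) auto

lemma cylinder_neighbourhood:
  assumes "openin (conf_topology Q) S" "x \<in> S"
  obtains W where "finite W" "cylinder W x Q \<subseteq> S"
proof -
  obtain U where "finite {i \<in> UNIV. U i \<noteq> topspace (discrete_topology Q)}"
      "x \<in> PiE UNIV U" "PiE UNIV U \<subseteq> S"
    using assms unfolding openin_product_topology_alt by blast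
  then have U: "finite {i. U i \<noteq> Q}" "x \<in> PiE UNIV U" "PiE UNIV U \<subseteq> S" by simp_all
  have "cylinder {i. U i \<noteq> Q} x Q \<subseteq> PiE UNIV U"
  proof
    fix y assume "y \<in> cylinder {i. U i \<noteq> Q} x Q"
    then have "y i \<in> U i" for i
      using U(2) by (cases "U i = Q") (auto simp: cylinder_def conf_def)
    then show "y \<in> PiE UNIV U" by auto
  qed
  then show ?thesis using U(1,3) by (intro that) auto
qed

lemma locally_determined_continuous_map:
  fixes G :: "(int \<Rightarrow> 'r) \<Rightarrow> (int \<Rightarrow> 'q)"
  assumes G: "locally_determined G" and range: "\<forall>s\<in>conf R. G s \<in> conf Q"
  shows "continuous_map (conf_topology R) (conf_topology Q) G"
  unfolding continuous_map_componentwise_UNIV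
proof
  fix z
  obtain W where "finite W" and det: "\<And>s s'. \<forall>w\<in>W. s w = s' w \<Longrightarrow> G s z = G s' z"
    using G unfolding locally_determined_def by blast
  show "continuous_map (conf_topology R) (discrete_topology Q) (\<lambda>s. G s z)"
    unfolding continuous_map_def
  proof safe
    fix s assume "s \<in> topspace (conf_topology R)"
    then show "G s z \<in> topspace (discrete_topology Q)" using range by (auto simp: conf_def)
  next
    fix B
    have preimage: "{s \<in> topspace (conf_topology R). G s z \<in> B}
        = (\<Union>u\<in>{s \<in> conf R. G s z \<in> B}. cylinder W u R)"
    proof safe
      fix s assume "s \<in> topspace (conf_topology R)" "G s z \<in> B"
      then show "s \<in> (\<Union>u\<in>{s \<in> conf R. G s z \<in> B}. cylinder W u R)"
        by (auto simp: cylinder_def)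
    next
      fix s u assume "u \<in> conf R" "G u z \<in> B" "s \<in> cylinder W u R"
      then show "G s z \<in> B" "s \<in> topspace (conf_topology R)"
        using det[of s u] by (auto simp: cylinder_def)
    qed
    show "openin (conf_topology R) {s \<in> topspace (conf_topology R). G s z \<in> B}"
      unfolding preimage by (intro openin_Union) (auto intro: openin_cylinder[OF \<open>finite W\<close>])
  qed
qed

lemma locally_determined_image_closedin:
  fixes G :: "(int \<Rightarrow> 'r) \<Rightarrow> (int \<Rightarrow> 'q)"
  assumes "locally_determined G" "finite R" "\<forall>s\<in>conf R. G s \<in> conf Q"
  shows "closedin (conf_topology Q) (G ` conf R)"
proof -
  have "compact_space (conf_topology R)"
    using assms(2) by (simp add: compact_space_product_topology compact_space_discrete_topology)
  then have "compactin (conf_topology R) (conf R)"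
    by (metis compact_space_def topspace_conf_topology)
  then have "compactin (conf_topology Q) (G ` conf R)"
    by (rule image_compactin[OF _ locally_determined_continuous_map[OF assms(1,3)]])
  then show ?thesis
    by (intro compactin_imp_closedin) (simp_all add: Hausdorff_space_product_topology)
qed

section \<open>The non-deterministic global function is the support of the stochastic one\<close>

lemma preimage_cylinder_in_sets:
  fixes G :: "(int \<Rightarrow> 'r) \<Rightarrow> (int \<Rightarrow> 'q)"
  assumes "locally_determined G" "finite R" "\<forall>s\<in>conf R. G s \<in> conf Q"
    and "finite W" "x \<in> conf Q"
  shows "G -` cylinder W x Q \<inter> conf R \<in> sets (uniform_fields R)"
  using measurable_sets[OF locally_determined_measurable[OF assms(1-3)], of "cylinder W x Q"]
    assms(4,5)
  by (simp add: cylinder_in_sets conf_def)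

lemma emeasure_preimage_cylinder_pos:
  fixes G :: "(int \<Rightarrow> 'r) \<Rightarrow> (int \<Rightarrow> 'q)"
  assumes G: "locally_determined G" and R: "finite R" and range: "\<forall>s\<in>conf R. G s \<in> conf Q"
    and s: "s \<in> conf R" and W: "finite W"
  shows "emeasure (uniform_fields R) (G -` cylinder W (G s) Q \<inter> conf R) \<noteq> 0"
proof -
  obtain V where V: "\<And>z. finite (V z)" "\<And>z s s'. \<forall>w\<in>V z. s w = s' w \<Longrightarrow> G s z = G s' z"
    using G unfolding locally_determined_def by metis
  have "s 0 \<in> R" using s by (simp add: conf_def)
  with R have "card R > 0" by (auto simp: card_gt_0_iff)
  then have "0 < ennreal (1 / real (card R)) ^ card (\<Union>(V ` W))"
    using zero_less_iff_neq_zero by fastforce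
  also have "ennreal (1 / real (card R)) ^ card (\<Union>(V ` W))
      = emeasure (uniform_fields R) (cylinder (\<Union>(V ` W)) s R)"
    using R s W V(1) by (simp add: emeasure_uniform_fields_cylinder)
  also have "\<dots> \<le> emeasure (uniform_fields R) (G -` cylinder W (G s) Q \<inter> conf R)"
  proof (rule emeasure_mono)
    show "cylinder (\<Union>(V ` W)) s R \<subseteq> G -` cylinder W (G s) Q \<inter> conf R"
    proof
      fix y assume y: "y \<in> cylinder (\<Union>(V ` W)) s R"
      then have "G y w = G s w" if "w \<in> W" for w
        using that by (intro V(2)) (auto simp: cylinder_def)
      with y range show "y \<in> G -` cylinder W (G s) Q \<inter> conf R"
        by (simp add: cylinder_def)
    qed
    show "G -` cylinder W (G s) Q \<inter> conf R \<in> sets (uniform_fields R)"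
      using preimage_cylinder_in_sets G R range W s by blast
  qed
  finally show ?thesis by simp
qed

lemma mem_image_iff_cylinders_positive:
  fixes G :: "(int \<Rightarrow> 'r) \<Rightarrow> (int \<Rightarrow> 'q)"
  assumes G: "locally_determined G" and R: "finite R" and range: "\<forall>s\<in>conf R. G s \<in> conf Q"
  shows "x \<in> G ` conf R \<longleftrightarrow> x \<in> conf Q \<and>
    (\<forall>W. finite W \<longrightarrow> emeasure (distr (uniform_fields R) (conf_space Q) G) (cylinder W x Q) \<noteq> 0)"
proof -
  have distr: "emeasure (distr (uniform_fields R) (conf_space Q) G) (cylinder W x Q)
      = emeasure (uniform_fields R) (G -` cylinder W x Q \<inter> conf R)"
    if "finite W" "x \<in> conf Q" for W x
    using emeasure_distr[OF locally_determined_measurable[OF G R range], of "cylinder W x Q"] that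
    by (simp add: cylinder_in_sets conf_def)
  show ?thesis
  proof safe
    fix s assume "s \<in> conf R"
    then show "G s \<in> conf Q" using range by blast
    fix W assume W: "finite W"
      and null: "emeasure (distr (uniform_fields R) (conf_space Q) G) (cylinder W (G s) Q) = 0"
    have "emeasure (uniform_fields R) (G -` cylinder W (G s) Q \<inter> conf R) \<noteq> 0"
      by (rule emeasure_preimage_cylinder_pos[OF G R range \<open>s \<in> conf R\<close> W])
    with null show False by (simp add: distr[OF W \<open>G s \<in> conf Q\<close>])
  next
    assume x: "x \<in> conf Q"
      and pos: "\<forall>W. finite W \<longrightarrow> emeasure (distr (uniform_fields R) (conf_space Q) G) (cylinder W x Q) \<noteq> 0"
    show "x \<in> G ` conf R"
    proof (rule ccontr)
      assume "x \<notin> G ` conf R"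
      have "openin (conf_topology Q) (conf Q - G ` conf R)"
        using locally_determined_image_closedin[OF G R range] by (simp add: closedin_def)
      moreover from x \<open>x \<notin> G ` conf R\<close> have "x \<in> conf Q - G ` conf R" by blast
      ultimately obtain W where "finite W" "cylinder W x Q \<subseteq> conf Q - G ` conf R"
        by (rule cylinder_neighbourhood)
      then have "G -` cylinder W x Q \<inter> conf R = {}" by blast
      then show False using pos distr[OF \<open>finite W\<close> x] \<open>finite W\<close> by simp
    qed
  qed
qed

lemma same_stochastic_imp_same_nondeterministic:
  fixes Fa :: "(int \<Rightarrow> 'q) \<Rightarrow> (int \<Rightarrow> 'ra) \<Rightarrow> (int \<Rightarrow> 'q)"
    and Fb :: "(int \<Rightarrow> 'q) \<Rightarrow> (int \<Rightarrow> 'rb) \<Rightarrow> (int \<Rightarrow> 'q)"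
  assumes "finite Ra" "finite Rb"
    and "\<And>c. locally_determined (Fa c)" "\<And>c. locally_determined (Fb c)"
    and "\<forall>c\<in>conf Q. \<forall>s\<in>conf Ra. Fa c s \<in> conf Q" "\<forall>c\<in>conf Q. \<forall>s\<in>conf Rb. Fb c s \<in> conf Q"
    and "same XS Q Ra Fa Rb Fb"
  shows "same XN Q Ra Fa Rb Fb"
  unfolding same_def xmode.case
proof
  fix c assume c: "c \<in> conf Q"
  have "SF Q Ra Fa c = SF Q Rb Fb c" using assms(7) c unfolding same_def by simp
  moreover have "\<forall>s\<in>conf Ra. Fa c s \<in> conf Q" "\<forall>s\<in>conf Rb. Fb c s \<in> conf Q"
    using assms(5,6) c by blast+
  ultimately show "NF Ra Fa c = NF Rb Fb c"
    unfolding NF_def SF_def set_eq_iff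
    by (simp add: mem_image_iff_cylinders_positive[OF assms(3,1)]
                  mem_image_iff_cylinders_positive[OF assms(4,2)])
qed

section \<open>Global functions preserve configurations\<close>

lemma finite_states_pow: "finite Q \<Longrightarrow> finite (states_pow Q m)"
  unfolding states_pow_def using finite_lists_length_eq[of Q m] by (simp add: conj_commute)

lemma finite_rand_pow: "finite R \<Longrightarrow> finite (rand_pow R m t)"
proof -
  assume "finite R"
  then have "finite {xs. set xs \<subseteq> states_pow R m \<and> length xs = t}"
    by (intro finite_lists_length_eq finite_states_pow)
  moreover have "rand_pow R m t = {xs. set xs \<subseteq> states_pow R m \<and> length xs = t}"
    unfolding rand_pow_def by auto
  ultimately show ?thesis by simp
qed

lemma GF_in_conf:
  assumes "is_sca A" "c \<in> conf (states A)" "s \<in> conf (rands A)"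
  shows "GF A c s \<in> conf (states A)"
proof -
  have rule: "rule A qs rs \<in> states A" if "length qs = length (nbh A)" "set qs \<subseteq> states A"
    "length rs = length (rnbh A)" "set rs \<subseteq> rands A" for qs rs
    using assms(1) that unfolding is_sca_def by blast
  have "rule A (map (\<lambda>v. c (z + v)) (nbh A)) (map (\<lambda>v. s (z + v)) (rnbh A)) \<in> states A" for z
    using assms(2,3) by (intro rule) (auto simp: conf_def)
  then show ?thesis unfolding GF_def conf_def by simp
qed

lemma giter_in_conf:
  assumes "\<forall>c\<in>conf Q. \<forall>s\<in>conf R. F c s \<in> conf Q" "c \<in> conf Q" "\<And>i. i < n \<Longrightarrow> ss i \<in> conf R"
  shows "giter F n c ss \<in> conf Q"
  using assms(3) by (induction n) (use assms(1,2) in auto)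

lemma unblk_in_conf:
  assumes "m \<ge> 1" "c \<in> conf (states_pow Q m)"
  shows "unblk m c \<in> conf Q"
  unfolding conf_def unblk_def
proof safe
  fix z
  have "nat (z mod int m) < m" using assms(1) by (simp add: nat_less_iff)
  moreover have "length (c (z div int m)) = m" "set (c (z div int m)) \<subseteq> Q"
    using assms(2) by (simp_all add: conf_def states_pow_def)
  ultimately show "c (z div int m) ! nat (z mod int m) \<in> Q" by (metis nth_mem subsetD)
qed

lemma blk_in_conf: "c \<in> conf Q \<Longrightarrow> blk m c \<in> conf (states_pow Q m)"
  by (auto simp: blk_def conf_def states_pow_def)

lemma rescale_in_conf:
  assumes A: "is_sca A" and m: "m \<ge> 1"
  shows "\<forall>c\<in>conf (states_pow (states A) m). \<forall>s\<in>conf (rand_pow (rands A) m t).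
           rescale A m t k c s \<in> conf (states_pow (states A) m)"
proof safe
  fix c s assume c: "c \<in> conf (states_pow (states A) m)" and s: "s \<in> conf (rand_pow (rands A) m t)"
  have "s j ! i \<in> states_pow (rands A) m" if "i < t" for i j
  proof -
    have "length (s j) = t" "\<forall>y\<in>set (s j). y \<in> states_pow (rands A) m"
      using s by (simp_all add: conf_def rand_pow_def)
    with \<open>i < t\<close> show ?thesis by simp
  qed
  then have fields: "(\<lambda>j. s j ! i) \<in> conf (states_pow (rands A) m)" if "i < t" for i
    using that by (simp add: conf_def)
  have "giter (GF A) t (unblk m c) (\<lambda>i. unblk m (\<lambda>j. s j ! i)) \<in> conf (states A)"
    by (intro giter_in_conf) (auto intro: GF_in_conf[OF A] unblk_in_conf[OF m] c fields)
  then show "rescale A m t k c s \<in> conf (states_pow (states A) m)"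
    unfolding rescale_def by (intro blk_in_conf) (simp add: conf_def shift_def)
qed

lemma restr_in_conf:
  assumes "restr_ok Q' i Q R F"
  shows "\<forall>c\<in>conf Q'. \<forall>s\<in>conf R. restr Q' i F c s \<in> conf Q'"
proof safe
  fix c s assume "c \<in> conf Q'" "s \<in> conf R"
  then have "F (i \<circ> c) s \<in> conf (i ` Q')"
    using assms unfolding restr_ok_def by (auto simp: conf_def)
  with assms show "restr Q' i F c s \<in> conf Q'"
    unfolding restr_ok_def restr_def conf_def by (auto intro: the_inv_into_into)
qed

lemma proj_in_conf:
  assumes "proj_ok p Q Q' R F" "\<forall>c\<in>conf Q. \<forall>s\<in>conf R. F c s \<in> conf Q"
  shows "\<forall>c\<in>conf Q'. \<forall>s\<in>conf R. proj p Q F c s \<in> conf Q'"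
proof safe
  fix c' s assume c': "c' \<in> conf Q'" and s: "s \<in> conf R"
  have pQ: "p ` Q = Q'" using assms(1) unfolding proj_ok_def by blast
  then have "c' z \<in> p ` Q" for z using c' by (simp add: conf_def)
  then have "\<forall>z. \<exists>q. q \<in> Q \<and> p q = c' z" by (metis imageE)
  then obtain c where "\<forall>z. c z \<in> Q \<and> p (c z) = c' z" by metis
  then have "\<exists>c. c \<in> conf Q \<and> p \<circ> c = c'" by (intro exI[of _ c]) (auto simp: conf_def fun_eq_iff)
  then have "(SOME c. c \<in> conf Q \<and> p \<circ> c = c') \<in> conf Q" by (metis (mono_tags, lifting) someI_ex)
  with assms(2) s pQ show "proj p Q F c' s \<in> conf Q'"
    unfolding proj_def by (auto simp: conf_def)
qed

lemma is_sca_finite_rand_pow: "is_sca A \<Longrightarrow> finite (rand_pow (rands A) m t)"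
  by (simp add: is_sca_def finite_rand_pow)

lemma sim_i_stochastic_imp_nondeterministic:
  fixes A1 :: "('q1, 'r1) sca" and A2 :: "('q2, 'r2) sca"
  assumes "is_sca A1" "is_sca A2" "sim_i XS A1 A2"
  shows "sim_i XN A1 A2"
proof -
  from assms(3) obtain m1 m2 t1 t2 k1 k2 and i :: "'q1 list \<Rightarrow> 'q2 list" where
    bounds: "m1 \<ge> 1" "m2 \<ge> 1" "t1 \<ge> 1" "t2 \<ge> 1" and
    ok: "restr_ok (states_pow (states A1) m1) i (states_pow (states A2) m2)
           (rand_pow (rands A2) m2 t2) (rescale A2 m2 t2 k2)" and
    same: "same XS (states_pow (states A1) m1) (rand_pow (rands A1) m1 t1) (rescale A1 m1 t1 k1)
           (rand_pow (rands A2) m2 t2) (restr (states_pow (states A1) m1) i (rescale A2 m2 t2 k2))"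
    unfolding sim_i_def by blast
  have "same XN (states_pow (states A1) m1) (rand_pow (rands A1) m1 t1) (rescale A1 m1 t1 k1)
          (rand_pow (rands A2) m2 t2) (restr (states_pow (states A1) m1) i (rescale A2 m2 t2 k2))"
    by (rule same_stochastic_imp_same_nondeterministic[OF
          is_sca_finite_rand_pow[OF assms(1)] is_sca_finite_rand_pow[OF assms(2)]
          locally_determined_rescale locally_determined_restr[OF locally_determined_rescale]
          rescale_in_conf[OF assms(1) bounds(1)] restr_in_conf[OF ok] same])
  with bounds ok show ?thesis unfolding sim_i_def by blast
qed

lemma sim_pi_stochastic_imp_nondeterministic:
  fixes A1 :: "('q1, 'r1) sca" and A2 :: "('q2, 'r2) sca"
  assumes "is_sca A1" "is_sca A2" "sim_pi XS A1 A2"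
  shows "sim_pi XN A1 A2"
proof -
  from assms(3) obtain m1 m2 t1 t2 k1 k2 and p :: "'q2 list \<Rightarrow> 'q1 list" where
    bounds: "m1 \<ge> 1" "m2 \<ge> 1" "t1 \<ge> 1" "t2 \<ge> 1" and
    ok: "proj_ok p (states_pow (states A2) m2) (states_pow (states A1) m1)
           (rand_pow (rands A2) m2 t2) (rescale A2 m2 t2 k2)" and
    same: "same XS (states_pow (states A1) m1) (rand_pow (rands A1) m1 t1) (rescale A1 m1 t1 k1)
           (rand_pow (rands A2) m2 t2) (proj p (states_pow (states A2) m2) (rescale A2 m2 t2 k2))"
    unfolding sim_pi_def by blast
  have "same XN (states_pow (states A1) m1) (rand_pow (rands A1) m1 t1) (rescale A1 m1 t1 k1)
          (rand_pow (rands A2) m2 t2) (proj p (states_pow (states A2) m2) (rescale A2 m2 t2 k2))"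
    by (rule same_stochastic_imp_same_nondeterministic[OF
          is_sca_finite_rand_pow[OF assms(1)] is_sca_finite_rand_pow[OF assms(2)]
          locally_determined_rescale locally_determined_proj[OF locally_determined_rescale]
          rescale_in_conf[OF assms(1) bounds(1)]
          proj_in_conf[OF ok rescale_in_conf[OF assms(2) bounds(2)]] same])
  with bounds ok show ?thesis unfolding sim_pi_def by blast
qed

lemma sim_m_stochastic_imp_nondeterministic:
  fixes A1 :: "('q1, 'r1) sca" and A2 :: "('q2, 'r2) sca"
  assumes "is_sca A1" "is_sca A2" "sim_m XS A1 A2"
  shows "sim_m XN A1 A2"
proof -
  from assms(3) obtain m1 m2 t1 t2 k1 k2 and Q' :: "'q2 list set" and i :: "'q2 list \<Rightarrow> 'q2 list"
      and p :: "'q2 list \<Rightarrow> 'q1 list" where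
    bounds: "m1 \<ge> 1" "m2 \<ge> 1" "t1 \<ge> 1" "t2 \<ge> 1" and
    ok_restr: "restr_ok Q' i (states_pow (states A2) m2) (rand_pow (rands A2) m2 t2)
                 (rescale A2 m2 t2 k2)" and
    ok_proj: "proj_ok p Q' (states_pow (states A1) m1) (rand_pow (rands A2) m2 t2)
                (restr Q' i (rescale A2 m2 t2 k2))" and
    same: "same XS (states_pow (states A1) m1) (rand_pow (rands A1) m1 t1) (rescale A1 m1 t1 k1)
           (rand_pow (rands A2) m2 t2) (proj p Q' (restr Q' i (rescale A2 m2 t2 k2)))"
    unfolding sim_m_def by blast
  have "same XN (states_pow (states A1) m1) (rand_pow (rands A1) m1 t1) (rescale A1 m1 t1 k1)
          (rand_pow (rands A2) m2 t2) (proj p Q' (restr Q' i (rescale A2 m2 t2 k2)))"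
    by (rule same_stochastic_imp_same_nondeterministic[OF
          is_sca_finite_rand_pow[OF assms(1)] is_sca_finite_rand_pow[OF assms(2)]
          locally_determined_rescale
          locally_determined_proj[OF locally_determined_restr[OF locally_determined_rescale]]
          rescale_in_conf[OF assms(1) bounds(1)]
          proj_in_conf[OF ok_proj restr_in_conf[OF ok_restr]] same])
  with bounds ok_restr ok_proj show ?thesis unfolding sim_m_def by blast
qed

theorem fact4:
  fixes A1 :: "('q1, 'r1) sca" and A2 :: "('q2, 'r2) sca"
  assumes "is_sca A1" and "is_sca A2"
  shows "(sim_i XS A1 A2 \<longrightarrow> sim_i XN A1 A2) \<and>
         (sim_pi XS A1 A2 \<longrightarrow> sim_pi XN A1 A2) \<and>
         (sim_m XS A1 A2 \<longrightarrow> sim_m XN A1 A2)"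
  using sim_i_stochastic_imp_nondeterministic sim_pi_stochastic_imp_nondeterministic
    sim_m_stochastic_imp_nondeterministic assms by blast

end
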